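(* Let $n\ge 5$ and let $G$ be a unicyclic graph on $n$ vertices. Suppose $G\not\cong C_n$ and the degree sequence of $G$ is not $(3,2,\ldots,2,1)$ (one vertex of degree $3$, $n-2$ of degree $2$, one of degree $1$). Then $\mathrm{irr}_t(G)\ge 4n-8$. Equality holds if and only if the degree sequence of $G$ is $(3,3,2,\ldots,2,1,1)$, i.e. two vertices of degree $3$, $n-4$ vertices of degree $2$ and two vertices of degree $1$.
   Context: A unicyclic graph is a simple connected graph whose number of edges equals its number of vertices. For a graph $G=(V,E)$ and $w\in V$, $d_G(w)$ is the degree of $w$. The total irregularity is $\mathrm{irr}_t(G)=\frac12\sum_{x,y\in V}|d_G(x)-d_G(y)|$, where the sum runs over all ordered pairs of vertices. $C_n$ is the cycle on $n$ vertices. Degree sequences are listed in nonincreasing order. *)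

theory Defs
  imports Complex_Main "HOL-Library.Multiset"
begin

definition simple_graph :: "'a set \<Rightarrow> 'a set set \<Rightarrow> bool" where
  "simple_graph V E \<longleftrightarrow> finite V \<and> (\<forall>e\<in>E. e \<subseteq> V \<and> card e = 2)"

definition adj :: "'a set set \<Rightarrow> 'a \<Rightarrow> 'a \<Rightarrow> bool" where
  "adj E u v \<longleftrightarrow> {u, v} \<in> E"

definition graph_connected :: "'a set \<Rightarrow> 'a set set \<Rightarrow> bool" where
  "graph_connected V E \<longleftrightarrow> V \<noteq> {} \<and>
     (\<forall>u\<in>V. \<forall>v\<in>V. (u, v) \<in> {(x, y). adj E x y}\<^sup>*)"

definition degree :: "'a set set \<Rightarrow> 'a \<Rightarrow> nat" where
  "degree E v = card {e\<in>E. v \<in> e}"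

definition unicyclic :: "'a set \<Rightarrow> 'a set set \<Rightarrow> bool" where
  "unicyclic V E \<longleftrightarrow> simple_graph V E \<and> graph_connected V E \<and> card E = card V"

definition cycle_edges :: "nat \<Rightarrow> nat set set" where
  "cycle_edges n = {{i, (i + 1) mod n} | i. i < n}"

definition graph_iso :: "'a set \<Rightarrow> 'a set set \<Rightarrow> 'b set \<Rightarrow> 'b set set \<Rightarrow> bool" where
  "graph_iso V E W F \<longleftrightarrow>
     (\<exists>f. bij_betw f V W \<and> (\<forall>u\<in>V. \<forall>v\<in>V. ({u, v} \<in> E \<longleftrightarrow> {f u, f v} \<in> F)))"

text \<open>Degree sequence as a multiset (order is irrelevant once sorted nonincreasingly).\<close>
definition degree_mset :: "'a set \<Rightarrow> 'a set set \<Rightarrow> nat multiset" where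
  "degree_mset V E = image_mset (degree E) (mset_set V)"

definition total_irregularity :: "'a set \<Rightarrow> 'a set set \<Rightarrow> real" where
  "total_irregularity V E =
     (1/2) * (\<Sum>x\<in>V. \<Sum>y\<in>V. \<bar>real (degree E x) - real (degree E y)\<bar>)"

end

theory Submission
  imports Defs
begin

text \<open>A unicyclic graph on n vertices has degree sum 2n. Writing a, b, c for the numbers of
  vertices of degree 1, of degree 2 and of degree at least 3, a direct computation gives
    irr_t(G) = a (n + b) + (1/2) (irregularity among the vertices of degree \<ge> 3),
  and the degree sum forces c \<le> a, with equality only if all those vertices have degree 3.
  The bound follows by cases on a: a = 0 means G is 2-regular, a = 1 yields the excluded
  sequence (3,2,...,2,1), a = 2 gives 4n-6 or (for the sequence (3,3,2,...,2,1,1)) exactly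
  4n-8, and a \<ge> 3 gives more than 4n-8.\<close>

lemma count_image_mset_set_card:
  assumes "finite V"
  shows "count (image_mset d (mset_set V)) k = card {x\<in>V. d x = k}"
proof -
  have "count (image_mset d (mset_set V)) k = (\<Sum>y\<in>d -` {k} \<inter> V. 1)"
    using assms by (simp add: count_image_mset)
  also have "\<dots> = card {x\<in>V. d x = k}"
    by (simp add: vimage_def Int_def conj_commute)
  finally show ?thesis .
qed

locale unicyclic_degrees =
  fixes V :: "'a set" and d :: "'a \<Rightarrow> nat" and n :: nat
  assumes finite_V: "finite V"
    and card_V: "card V = n"
    and deg_pos: "\<And>v. v \<in> V \<Longrightarrow> d v \<ge> 1"
    and deg_sum: "(\<Sum>v\<in>V. d v) = 2 * n"
begin

definition leaves :: "'a set" where "leaves = {x\<in>V. d x = 1}"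
definition middles :: "'a set" where "middles = {x\<in>V. d x = 2}"
definition branches :: "'a set" where "branches = {x\<in>V. d x \<ge> 3}"

definition irr :: real where
  "irr = (1/2) * (\<Sum>x\<in>V. \<Sum>y\<in>V. \<bar>real (d x) - real (d y)\<bar>)"
definition branch_irr :: real where
  "branch_irr = (\<Sum>x\<in>branches. \<Sum>y\<in>branches. \<bar>real (d x) - real (d y)\<bar>)"

lemma finite_classes: "finite leaves" "finite middles" "finite branches"
  using finite_V unfolding leaves_def middles_def branches_def by auto

text \<open>Since all degrees are positive, the three classes partition V.\<close>
lemma sum_by_class:
  fixes g :: "'a \<Rightarrow> real"
  shows "(\<Sum>x\<in>V. g x) = (\<Sum>x\<in>leaves. g x) + (\<Sum>x\<in>middles. g x) + (\<Sum>x\<in>branches. g x)"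
proof -
  have "V = (leaves \<union> middles) \<union> branches"
    using deg_pos unfolding leaves_def middles_def branches_def by force
  moreover have "leaves \<inter> middles = {}" "(leaves \<union> middles) \<inter> branches = {}"
    unfolding leaves_def middles_def branches_def by auto
  ultimately show ?thesis
    using finite_classes by (metis finite_UnI sum.union_disjoint)
qed

lemma card_classes: "card leaves + card middles + card branches = n"
proof -
  have "real n = real (card leaves) + real (card middles) + real (card branches)"
    using sum_by_class[of "\<lambda>_. 1"] card_V by simp
  then show ?thesis by linarith
qed

text \<open>The degree sum forces the total excess of the branch vertices over 3 to equal
  the number of leaves minus the number of branch vertices.\<close>
lemma branch_excess: "(\<Sum>x\<in>branches. real (d x) - 3) = real (card leaves) - real (card branches)"
proof -
  have "2 * real n = (\<Sum>x\<in>V. real (d x))"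
    using deg_sum by (metis of_nat_sum of_nat_mult of_nat_numeral)
  also have "\<dots> = real (card leaves) + 2 * real (card middles) + (\<Sum>x\<in>branches. real (d x))"
    unfolding sum_by_class[of "\<lambda>x. real (d x)"] by (simp add: leaves_def middles_def)
  finally show ?thesis
    using card_classes by (simp add: sum_subtractf)
qed

lemma branch_excess_nonneg: "(\<Sum>x\<in>branches. real (d x) - 3) \<ge> 0"
  unfolding branches_def by (intro sum_nonneg) auto

lemma branches_le_leaves: "card branches \<le> card leaves"
  using branch_excess branch_excess_nonneg by linarith

lemma branches_nonempty:
  assumes "card leaves \<ge> 1" shows "card branches \<ge> 1"
proof (rule ccontr)
  assume "\<not> card branches \<ge> 1"
  then have "card branches = 0" by linarith
  then have "branches = {}" using finite_classes(3) by simp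
  then show False using branch_excess assms by simp
qed

lemma branches_cubic:
  assumes "card branches = card leaves" and "x \<in> branches" shows "d x = 3"
proof -
  have "\<forall>x\<in>branches. real (d x) - 3 = 0"
    using sum_nonneg_eq_0_iff[OF finite_classes(3), of "\<lambda>x. real (d x) - 3"]
      branch_excess assms(1) unfolding branches_def by auto
  then show ?thesis using assms(2) by auto
qed

lemma row_sum_leaf:
  assumes "x \<in> leaves"
  shows "(\<Sum>y\<in>V. \<bar>real (d x) - real (d y)\<bar>) = real n"
proof -
  have "(\<Sum>y\<in>V. \<bar>real (d x) - real (d y)\<bar>) = (\<Sum>y\<in>V. real (d y) - 1)"
    using assms deg_pos unfolding leaves_def by (intro sum.cong) auto
  also have "\<dots> = real n"
    using deg_sum card_V by (simp add: sum_subtractf) (metis of_nat_sum of_nat_mult of_nat_numeral)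
  finally show ?thesis .
qed

lemma row_sum_middle:
  assumes "x \<in> middles"
  shows "(\<Sum>y\<in>V. \<bar>real (d x) - real (d y)\<bar>) = 2 * real (card leaves)"
proof -
  have dx: "d x = 2" using assms unfolding middles_def by simp
  have "(\<Sum>y\<in>branches. \<bar>real (d x) - real (d y)\<bar>) = (\<Sum>y\<in>branches. real (d y) - 2)"
    using dx unfolding branches_def by (intro sum.cong) auto
  also have "\<dots> = real (card leaves)"
    using branch_excess by (simp add: sum_subtractf)
  finally have "(\<Sum>y\<in>branches. \<bar>real (d x) - real (d y)\<bar>) = real (card leaves)" .
  then show ?thesis
    unfolding sum_by_class[of "\<lambda>y. \<bar>real (d x) - real (d y)\<bar>"] using dx
    by (simp add: leaves_def middles_def)
qed

lemma row_sum_branch: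
  assumes "x \<in> branches"
  shows "(\<Sum>y\<in>V. \<bar>real (d x) - real (d y)\<bar>) = real (card leaves) * (real (d x) - 1)
    + real (card middles) * (real (d x) - 2) + (\<Sum>y\<in>branches. \<bar>real (d x) - real (d y)\<bar>)"
proof -
  have dx: "d x \<ge> 3" using assms unfolding branches_def by simp
  have "(\<Sum>y\<in>leaves. \<bar>real (d x) - real (d y)\<bar>) = (\<Sum>y\<in>leaves. real (d x) - 1)"
    using dx unfolding leaves_def by (intro sum.cong) auto
  moreover have "(\<Sum>y\<in>middles. \<bar>real (d x) - real (d y)\<bar>) = (\<Sum>y\<in>middles. real (d x) - 2)"
    using dx unfolding middles_def by (intro sum.cong) auto
  ultimately show ?thesis
    unfolding sum_by_class[of "\<lambda>y. \<bar>real (d x) - real (d y)\<bar>"] by (simp add: mult.commute)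
qed

lemma irr_decomposition:
  "irr = real (card leaves) * (real n + real (card middles)) + branch_irr / 2"
proof -
  let ?row = "\<lambda>x. \<Sum>y\<in>V. \<bar>real (d x) - real (d y)\<bar>"
  have "(\<Sum>x\<in>branches. ?row x) = real (card leaves) * ((\<Sum>x\<in>branches. real (d x)) - real (card branches))
      + real (card middles) * ((\<Sum>x\<in>branches. real (d x)) - 2 * real (card branches)) + branch_irr"
    unfolding branch_irr_def using row_sum_branch
    by (simp add: sum.distrib sum_subtractf sum_distrib_left[symmetric])
  also have "(\<Sum>x\<in>branches. real (d x)) = real (card leaves) + 2 * real (card branches)"
    using branch_excess by (simp add: sum_subtractf)
  finally have "(\<Sum>x\<in>branches. ?row x) = real (card leaves) * (real (card leaves) + real (card branches))
      + real (card middles) * real (card leaves) + branch_irr"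
    by (simp add: algebra_simps)
  moreover have "(\<Sum>x\<in>leaves. ?row x) = real (card leaves) * real n"
    using row_sum_leaf by simp
  moreover have "(\<Sum>x\<in>middles. ?row x) = real (card middles) * (2 * real (card leaves))"
    using row_sum_middle by simp
  moreover have "real n = real (card leaves) + real (card middles) + real (card branches)"
    using card_classes by linarith
  ultimately show ?thesis
    unfolding irr_def sum_by_class[of ?row] by (simp add: algebra_simps)
qed

lemma branch_irr_nonneg: "branch_irr \<ge> 0"
  unfolding branch_irr_def by (intro sum_nonneg) auto

lemma branch_irr_zero:
  assumes "\<And>x y. x \<in> branches \<Longrightarrow> y \<in> branches \<Longrightarrow> d x = d y"
  shows "branch_irr = 0"
  unfolding branch_irr_def by (intro sum.neutral ballI) (metis assms abs_zero diff_self)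

definition degree_seq :: "nat multiset" where
  "degree_seq = image_mset d (mset_set V)"

lemma count_degree_seq: "count degree_seq k = card {x\<in>V. d x = k}"
  unfolding degree_seq_def using count_image_mset_set_card[OF finite_V] .

lemma degree_seq_cubic:
  assumes "\<And>x. x \<in> branches \<Longrightarrow> d x = 3"
  shows "degree_seq = replicate_mset (card branches) 3 + replicate_mset (card middles) 2
    + replicate_mset (card leaves) 1"
proof (rule multiset_eqI)
  fix k
  have "{x\<in>V. d x = k} = (if k = 1 then leaves else if k = 2 then middles
      else if k = 3 then branches else {})"
    using assms deg_pos unfolding leaves_def middles_def branches_def by force
  then show "count degree_seq k = count (replicate_mset (card branches) 3
      + replicate_mset (card middles) 2 + replicate_mset (card leaves) 1) k"
    unfolding count_degree_seq by auto
qed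

lemma one_leaf:
  assumes "card leaves = 1"
  shows "degree_seq = {#3#} + replicate_mset (n - 2) 2 + {#1#}"
proof -
  have c: "card branches = 1"
    using branches_le_leaves branches_nonempty assms by simp
  then have "card middles = n - 2" using card_classes assms by simp
  then show ?thesis
    using degree_seq_cubic[OF branches_cubic] c assms by simp
qed

lemma two_leaves:
  assumes "card leaves = 2"
  shows "card branches \<in> {1, 2}" and "irr = 4 * real n - 4 - 2 * real (card branches)"
proof -
  show c: "card branches \<in> {1, 2}"
    using branches_le_leaves branches_nonempty assms by auto
  have "branch_irr = 0"
  proof (rule branch_irr_zero)
    fix x y assume xy: "x \<in> branches" "y \<in> branches"
    show "d x = d y"
    proof (cases "card branches = 1")
      case True
      then obtain z where "branches = {z}" by (rule card_1_singletonE)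
      then show ?thesis using xy by simp
    next
      case False
      then have "card branches = card leaves" using c assms by simp
      then show ?thesis using branches_cubic xy by metis
    qed
  qed
  moreover have "real (card middles) = real n - 2 - real (card branches)"
    using card_classes assms by linarith
  ultimately show "irr = 4 * real n - 4 - 2 * real (card branches)"
    using irr_decomposition assms by simp
qed

lemma many_leaves:
  assumes "card leaves \<ge> 3" and "n \<ge> 5"
  shows "irr > 4 * real n - 8"
proof -
  have "real (card leaves) * (real n + real (card middles)) > 4 * real n - 8"
  proof (cases "card leaves \<ge> 4")
    case True
    have "real (card leaves) * (real n + real (card middles)) \<ge> 4 * (real n + real (card middles))"
      using True by (intro mult_right_mono) auto
    then show ?thesis by simp
  next
    case False
    then have "card leaves = 3" using assms by simp
    moreover have "card middles + 6 \<ge> n" using card_classes branches_le_leaves \<open>card leaves = 3\<close> by linarith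
    ultimately show ?thesis using assms by simp
  qed
  then show ?thesis using irr_decomposition branch_irr_nonneg by linarith
qed

theorem irr_lower_bound:
  assumes n5: "n \<ge> 5" and not_all_2: "\<exists>v\<in>V. d v \<noteq> 2"
    and not_321: "degree_seq \<noteq> {#3#} + replicate_mset (n - 2) 2 + {#1#}"
  shows "irr \<ge> 4 * real n - 8 \<and>
    (irr = 4 * real n - 8 \<longleftrightarrow> degree_seq = replicate_mset 2 3 + replicate_mset (n - 4) 2 + replicate_mset 2 1)"
proof -
  let ?extremal = "replicate_mset 2 3 + replicate_mset (n - 4) 2 + replicate_mset 2 (1::nat)"
  have count_1: "count degree_seq 1 = card leaves" and count_2: "count degree_seq 2 = card middles"
    unfolding count_degree_seq leaves_def middles_def by simp_all
  consider "card leaves = 0" | "card leaves = 1" | "card leaves = 2" | "card leaves \<ge> 3" by linarith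
  then show ?thesis
  proof cases
    case 1
    then have "leaves = {}" "branches = {}"
      using branches_le_leaves finite_classes by simp_all
    then have "\<forall>v\<in>V. d v = 2"
      using deg_pos unfolding leaves_def branches_def by force
    then show ?thesis using not_all_2 by blast
  next
    case 2
    then show ?thesis using one_leaf not_321 by blast
  next
    case 3
    show ?thesis
    proof (cases "card branches = 1")
      case True
      then have "card middles = n - 3" using card_classes 3 by simp
      then have "count degree_seq 2 \<noteq> count ?extremal 2" using count_2 n5 by simp
      then show ?thesis using two_leaves(2)[OF 3] True by auto
    next
      case False
      then have "card branches = 2" using two_leaves(1)[OF 3] by simp
      moreover from this have "card middles = n - 4" using card_classes 3 by simp
      ultimately have "degree_seq = ?extremal"
        using degree_seq_cubic[OF branches_cubic] 3 by simp
      then show ?thesis using two_leaves(2)[OF 3] \<open>card branches = 2\<close> by simp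
    qed
  next
    case 4
    then have "count degree_seq 1 \<noteq> count ?extremal 1" using count_1 by simp
    then show ?thesis using many_leaves[OF 4 n5] by auto
  qed
qed

end

lemma simple_graph_finite_edges:
  assumes "simple_graph V E" shows "finite E"
proof -
  have "E \<subseteq> Pow V" "finite V" using assms unfolding simple_graph_def by auto
  then show ?thesis by (meson finite_Pow_iff rev_finite_subset)
qed

lemma handshake:
  assumes sg: "simple_graph V E"
  shows "(\<Sum>v\<in>V. degree E v) = 2 * card E"
proof -
  have finV: "finite V" using sg unfolding simple_graph_def by auto
  have finE: "finite E" using simple_graph_finite_edges[OF sg] .
  have "(\<Sum>v\<in>V. degree E v) = (\<Sum>v\<in>V. \<Sum>e\<in>E. if v \<in> e then 1 else 0)"
    unfolding degree_def using finE by (simp add: sum.If_cases Int_def conj_commute)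
  also have "\<dots> = (\<Sum>e\<in>E. \<Sum>v\<in>V. if v \<in> e then 1 else 0)" by (rule sum.swap)
  also have "\<dots> = (\<Sum>e\<in>E. card e)"
  proof (rule sum.cong)
    fix e assume "e \<in> E"
    then have "V \<inter> e = e" using sg unfolding simple_graph_def by auto
    then show "(\<Sum>v\<in>V. if v \<in> e then 1 else 0) = card e"
      using finV by (simp add: sum.If_cases)
  qed simp
  also have "\<dots> = (\<Sum>e\<in>E. 2)" using sg unfolding simple_graph_def by (intro sum.cong) auto
  finally show ?thesis by simp
qed

definition nbrs :: "'a set set \<Rightarrow> 'a \<Rightarrow> 'a set" where
  "nbrs E v = {w. {v, w} \<in> E}"

lemma nbrs_simple:
  assumes "simple_graph V E" and "w \<in> nbrs E v"
  shows "v \<in> V" "w \<in> V" "w \<noteq> v" "v \<in> nbrs E w"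
proof -
  have e: "{v, w} \<in> E" using assms(2) unfolding nbrs_def by simp
  then have "{v, w} \<subseteq> V" "card {v, w} = 2" using assms(1) unfolding simple_graph_def by auto
  then show "v \<in> V" "w \<in> V" "w \<noteq> v" "v \<in> nbrs E w"
    using e unfolding nbrs_def by (auto simp: insert_commute)
qed

lemma card_nbrs:
  assumes sg: "simple_graph V E"
  shows "card (nbrs E v) = degree E v"
proof -
  have "bij_betw (\<lambda>w. {v, w}) (nbrs E v) {e\<in>E. v \<in> e}"
  proof (rule bij_betwI')
    fix x y assume "x \<in> nbrs E v" "y \<in> nbrs E v"
    then have "x \<noteq> v" "y \<noteq> v" using nbrs_simple[OF sg] by auto
    then show "({v, x} = {v, y}) = (x = y)" by (auto simp: doubleton_eq_iff)
  next
    fix x assume "x \<in> nbrs E v" then show "{v, x} \<in> {e\<in>E. v \<in> e}" unfolding nbrs_def by auto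
  next
    fix e assume "e \<in> {e\<in>E. v \<in> e}"
    then have e: "e \<in> E" "v \<in> e" by auto
    then have "card e = 2" using sg unfolding simple_graph_def by auto
    then obtain x y where "e = {x, y}" "x \<noteq> y" by (meson card_2_iff)
    then have "e = {v, if x = v then y else x}" using e(2) by auto
    then show "\<exists>x\<in>nbrs E v. e = {v, x}" using e(1) unfolding nbrs_def by blast
  qed
  then show ?thesis unfolding degree_def by (rule bij_betw_same_card)
qed

lemma connected_closed_set:
  assumes con: "graph_connected V E" and "u \<in> V" "u \<in> S"
    and closed: "\<And>x y. x \<in> S \<Longrightarrow> y \<in> nbrs E x \<Longrightarrow> y \<in> S"
  shows "V \<subseteq> S"
proof
  fix v assume "v \<in> V"
  then have "(u, v) \<in> {(x, y). adj E x y}\<^sup>*" using con \<open>u \<in> V\<close> unfolding graph_connected_def by auto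
  then show "v \<in> S"
  proof (induction rule: rtrancl_induct)
    case base then show ?case using \<open>u \<in> S\<close> .
  next
    case (step y z)
    then show ?case using closed unfolding adj_def nbrs_def by simp
  qed
qed

lemma degree_pos:
  assumes sg: "simple_graph V E" and con: "graph_connected V E" and two: "card V \<ge> 2"
    and v: "v \<in> V"
  shows "degree E v \<ge> 1"
proof (rule ccontr)
  assume "\<not> degree E v \<ge> 1"
  then have "card (nbrs E v) = 0" using card_nbrs[OF sg] by simp
  moreover have "finite (nbrs E v)"
    using sg nbrs_simple(2)[OF sg] unfolding simple_graph_def by (meson finite_subset subsetI)
  ultimately have "nbrs E v = {}" by simp
  then have "V \<subseteq> {v}" using connected_closed_set[OF con v, of "{v}"] by auto
  then have "card V \<le> card {v}" by (intro card_mono) auto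
  then show False using two by simp
qed

lemma cycle_edges_iff:
  fixes i j n :: nat
  assumes "i < n" "j < n" "n \<ge> 3"
  shows "{i, j} \<in> cycle_edges n \<longleftrightarrow> j = (i + 1) mod n \<or> j = (i + n - 1) mod n"
proof
  assume "{i, j} \<in> cycle_edges n"
  then obtain k where k: "k < n" "{i, j} = {k, (k + 1) mod n}" unfolding cycle_edges_def by auto
  then consider "i = k" "j = (k + 1) mod n" | "j = k" "i = (k + 1) mod n" by (auto simp: doubleton_eq_iff)
  then show "j = (i + 1) mod n \<or> j = (i + n - 1) mod n"
  proof cases
    case 1 then show ?thesis by simp
  next
    case 2 then show ?thesis using k assms by (cases "k + 1 < n") (auto simp: mod_if)
  qed
next
  assume "j = (i + 1) mod n \<or> j = (i + n - 1) mod n"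
  then show "{i, j} \<in> cycle_edges n"
  proof
    assume "j = (i + 1) mod n"
    then show ?thesis unfolding cycle_edges_def using assms by auto
  next
    assume j: "j = (i + n - 1) mod n"
    have "i = (j + 1) mod n" using assms j by (cases "i = 0") (auto simp: mod_if)
    then have "{i, j} = {j, (j + 1) mod n}" by auto
    then show ?thesis unfolding cycle_edges_def using assms by auto
  qed
qed

text \<open>Connected 2-regular graphs. A non-backtracking walk in such a graph first revisits
  a vertex at its starting point, and the closed walk obtained is a Hamiltonian cycle.\<close>
locale two_regular_graph =
  fixes V :: "'a set" and E :: "'a set set"
  assumes simple: "simple_graph V E"
    and connected: "graph_connected V E"
    and two_reg: "\<And>v. v \<in> V \<Longrightarrow> degree E v = 2"
begin

lemma finite_V: "finite V"
  using simple unfolding simple_graph_def by simp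

lemma nbrs_pair:
  assumes "v \<in> V" "x \<in> nbrs E v" "y \<in> nbrs E v" "x \<noteq> y"
  shows "nbrs E v = {x, y}"
proof -
  have "finite (nbrs E v)"
    using finite_V nbrs_simple(2)[OF simple] by (meson finite_subset subsetI)
  moreover have "card {x, y} = card (nbrs E v)"
    using assms card_nbrs[OF simple] two_reg by simp
  moreover have "{x, y} \<subseteq> nbrs E v" using assms by simp
  ultimately show ?thesis using card_seteq by (metis order_refl)
qed

lemma other_nbr:
  assumes "v \<in> V" shows "\<exists>x. x \<in> nbrs E v \<and> x \<noteq> p"
proof -
  have "card (nbrs E v) = 2" using assms card_nbrs[OF simple] two_reg by simp
  then obtain x y where "nbrs E v = {x, y}" "x \<noteq> y" by (meson card_2_iff)
  then show ?thesis by (cases "x = p") auto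
qed

definition nb_walk :: "(nat \<Rightarrow> 'a) \<Rightarrow> bool" where
  "nb_walk w \<longleftrightarrow> (\<forall>k. w k \<in> V \<and> w (Suc k) \<in> nbrs E (w k) \<and> w (Suc (Suc k)) \<noteq> w k)"

lemma nb_walk_exists: "\<exists>w. nb_walk w"
proof -
  obtain v0 where v0: "v0 \<in> V" using connected unfolding graph_connected_def by auto
  obtain v1 where v1: "v1 \<in> nbrs E v0" using other_nbr[OF v0] by blast
  define step where "step = (\<lambda>(p, c). (c, SOME x. x \<in> nbrs E c \<and> x \<noteq> p))"
  define pos where "pos = (\<lambda>k. (step ^^ k) (v0, v1))"
  have step_ok: "fst (step q) \<in> V \<and> snd (step q) \<in> nbrs E (fst (step q)) \<and> snd (step q) \<noteq> fst q"
    if "fst q \<in> V" "snd q \<in> nbrs E (fst q)" for q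
  proof -
    have c: "snd q \<in> V" using nbrs_simple(2)[OF simple] that(2) .
    show ?thesis using someI_ex[OF other_nbr[OF c, of "fst q"]] c
      unfolding step_def by (simp add: case_prod_beta)
  qed
  have inv: "fst (pos k) \<in> V \<and> snd (pos k) \<in> nbrs E (fst (pos k))" for k
    by (induction k) (use v0 v1 step_ok in \<open>simp_all add: pos_def\<close>)
  have "nb_walk (\<lambda>k. fst (pos k))"
    unfolding nb_walk_def
  proof (intro allI conjI)
    fix k
    have "pos (Suc k) = step (pos k)" "pos (Suc (Suc k)) = step (step (pos k))"
      unfolding pos_def by simp_all
    moreover have "fst (step q) = snd q" for q unfolding step_def by (simp add: case_prod_beta)
    ultimately show "fst (pos k) \<in> V" "fst (pos (Suc k)) \<in> nbrs E (fst (pos k))"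
      "fst (pos (Suc (Suc k))) \<noteq> fst (pos k)"
      using inv[of k] step_ok[of "pos k"] by simp_all
  qed
  then show ?thesis by blast
qed

lemma nb_walkD:
  assumes "nb_walk w"
  shows "w k \<in> V" "w (Suc k) \<in> nbrs E (w k)" "w k \<in> nbrs E (w (Suc k))"
    "w (Suc k) \<noteq> w k" "w (Suc (Suc k)) \<noteq> w k"
  using assms nbrs_simple[OF simple] unfolding nb_walk_def by blast+

text \<open>If w m is the first vertex repeating an earlier one, w i, then i = 0: otherwise w i
  would have three distinct neighbours w (i-1), w (i+1) and w (m-1).\<close>
lemma nb_walk_first_repeat:
  assumes w: "nb_walk w" and im: "i < m" "w i = w m"
    and distinct: "\<And>a b. a < b \<Longrightarrow> b < m \<Longrightarrow> w a \<noteq> w b"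
  shows "i = 0"
proof (rule ccontr)
  assume "i \<noteq> 0"
  then obtain j where j: "i = Suc j" by (cases i) auto
  have "m \<noteq> Suc i" "m \<noteq> Suc (Suc i)" using nb_walkD[OF w] im by metis+
  then obtain p where p: "m = Suc p" "p > Suc i" using im by (cases m) auto
  have "nbrs E (w i) = {w j, w (Suc i)}"
    using nbrs_pair nb_walkD[OF w, of i] nb_walkD(3,5)[OF w, of j] j by simp
  moreover have "w p \<in> nbrs E (w i)" using nb_walkD(3)[OF w, of p] p im by simp
  ultimately show False using distinct[of j p] distinct[of "Suc i" p] p j by auto
qed

lemma nb_walk_closes:
  assumes w: "nb_walk w"
  shows "\<exists>m\<ge>3. w m = w 0 \<and> inj_on w {0..<m}"
proof -
  have "\<not> inj w"
  proof
    assume "inj w"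
    moreover have "range w \<subseteq> V" using nb_walkD(1)[OF w] by auto
    ultimately show False using finite_V by (meson finite_imageD finite_subset infinite_UNIV_nat)
  qed
  then have rep: "\<exists>j. \<exists>i<j. w i = w j" unfolding inj_def by (metis linorder_neqE_nat)
  define m where "m = (LEAST j. \<exists>i<j. w i = w j)"
  obtain i where i: "i < m" "w i = w m" using LeastI_ex[OF rep] unfolding m_def by blast
  have distinct: "w a \<noteq> w b" if "a < b" "b < m" for a b
    using not_less_Least[of b "\<lambda>j. \<exists>i<j. w i = w j"] that unfolding m_def by blast
  have closed: "w m = w 0" using nb_walk_first_repeat[OF w i distinct] i by simp
  have "m \<noteq> 0" "m \<noteq> 1" "m \<noteq> 2"
    using i nb_walkD(4,5)[OF w, of 0] closed by (auto simp: numeral_2_eq_2)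
  moreover have "inj_on w {0..<m}"
    using distinct by (auto simp: inj_on_def) (metis linorder_neqE_nat)
  ultimately show ?thesis using closed by (intro exI[of _ m]) auto
qed

lemma closed_walk_nbrs:
  assumes w: "nb_walk w" and m: "m \<ge> 3" "w m = w 0" and inj: "inj_on w {0..<m}" and i: "i < m"
  shows "nbrs E (w i) = {w ((i + 1) mod m), w ((i + m - 1) mod m)}"
proof (rule nbrs_pair)
  show "w i \<in> V" using nb_walkD(1)[OF w] .
  show "w ((i + 1) mod m) \<in> nbrs E (w i)"
  proof (cases "i + 1 < m")
    case True
    then show ?thesis using nb_walkD(2)[OF w, of i] by simp
  next
    case False
    then have "Suc i = m" using i by simp
    then show ?thesis using nb_walkD(2)[OF w, of i] m by auto
  qed
  show "w ((i + m - 1) mod m) \<in> nbrs E (w i)"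
  proof (cases i)
    case 0
    obtain q where "m = Suc q" using m by (cases m) auto
    then show ?thesis using nb_walkD(3)[OF w, of q] m 0 by simp
  next
    case (Suc q)
    then show ?thesis using nb_walkD(3)[OF w, of q] i by simp
  qed
  have "(i + 1) mod m \<noteq> (i + m - 1) mod m"
    using i m by (cases "i = 0"; cases "i + 1 = m") (auto simp: mod_if)
  then show "w ((i + 1) mod m) \<noteq> w ((i + m - 1) mod m)"
    using inj m by (auto simp: inj_on_def)
qed

lemma closed_walk_covers:
  assumes w: "nb_walk w" and m: "m \<ge> 3" "w m = w 0" and inj: "inj_on w {0..<m}"
  shows "w ` {0..<m} = V"
proof
  show "w ` {0..<m} \<subseteq> V" using nb_walkD(1)[OF w] by auto
  show "V \<subseteq> w ` {0..<m}"
  proof (rule connected_closed_set[OF connected nb_walkD(1)[OF w]])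
    show "w 0 \<in> w ` {0..<m}" using m by auto
    fix x y assume "x \<in> w ` {0..<m}" "y \<in> nbrs E x"
    then obtain i where "i < m" "x = w i" "y \<in> nbrs E (w i)" by auto
    then show "y \<in> w ` {0..<m}" using closed_walk_nbrs[OF assms] m by auto
  qed
qed

theorem iso_cycle: "graph_iso V E {0..<card V} (cycle_edges (card V))"
proof -
  obtain w where w: "nb_walk w" using nb_walk_exists ..
  then obtain m where m: "m \<ge> 3" "w m = w 0" and inj: "inj_on w {0..<m}"
    using nb_walk_closes by blast
  have cover: "w ` {0..<m} = V" using closed_walk_covers[OF w m inj] .
  then have "card V = m" using card_image[OF inj] by simp
  then have bw: "bij_betw w {0..<m} V" using inj cover unfolding bij_betw_def by simp
  define f where "f = inv_into {0..<m} w"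
  have bf: "bij_betw f V {0..<m}" unfolding f_def using bw by (rule bij_betw_inv_into)
  show ?thesis unfolding graph_iso_def \<open>card V = m\<close>
  proof (intro exI conjI ballI)
    show "bij_betw f V {0..<m}" by (rule bf)
    fix u v assume uv: "u \<in> V" "v \<in> V"
    have ij: "f u < m" "f v < m" using bf uv unfolding bij_betw_def by auto
    have wf: "w (f u) = u" "w (f v) = v"
      unfolding f_def using bw uv by (auto simp: bij_betw_def f_inv_into_f)
    have "{u, v} \<in> E \<longleftrightarrow> w (f v) \<in> nbrs E (w (f u))" unfolding nbrs_def wf by simp
    also have "\<dots> \<longleftrightarrow> w (f v) = w ((f u + 1) mod m) \<or> w (f v) = w ((f u + m - 1) mod m)"
      using closed_walk_nbrs[OF w m inj ij(1)] by simp
    also have "\<dots> \<longleftrightarrow> f v = (f u + 1) mod m \<or> f v = (f u + m - 1) mod m"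
      using inj_on_eq_iff[OF inj] ij m by simp
    also have "\<dots> \<longleftrightarrow> {f u, f v} \<in> cycle_edges m" using cycle_edges_iff[OF ij m(1)] by simp
    finally show "({u, v} \<in> E) = ({f u, f v} \<in> cycle_edges m)" .
  qed
qed

end

theorem theorem10:
  fixes V :: "'a set" and E :: "'a set set" and n :: nat
  assumes "n \<ge> 5"
    and "card V = n"
    and "unicyclic V E"
    and "\<not> graph_iso V E {0..<n} (cycle_edges n)"
    and "degree_mset V E \<noteq> {#3#} + replicate_mset (n - 2) 2 + {#1#}"
  shows "total_irregularity V E \<ge> 4 * real n - 8 \<and>
         (total_irregularity V E = 4 * real n - 8 \<longleftrightarrow>
           degree_mset V E = replicate_mset 2 3 + replicate_mset (n - 4) 2 + replicate_mset 2 1)"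
proof -
  have sg: "simple_graph V E" and con: "graph_connected V E" and cE: "card E = card V"
    using assms(3) unfolding unicyclic_def by auto
  interpret unicyclic_degrees V "degree E" n
  proof
    show "finite V" using sg unfolding simple_graph_def by simp
    show "card V = n" by (rule assms(2))
    show "(\<Sum>v\<in>V. degree E v) = 2 * n" using handshake[OF sg] cE assms(2) by simp
    show "\<And>v. v \<in> V \<Longrightarrow> degree E v \<ge> 1" using degree_pos[OF sg con] assms(1,2) by simp
  qed
  have not_2_regular: "\<exists>v\<in>V. degree E v \<noteq> 2"
  proof (rule ccontr)
    assume "\<not> (\<exists>v\<in>V. degree E v \<noteq> 2)"
    then interpret two_regular_graph V E using sg con by unfold_locales auto
    show False using iso_cycle assms(2,4) by simp
  qed
  show ?thesis
    using irr_lower_bound[OF assms(1) not_2_regular] assms(5)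
    unfolding total_irregularity_def degree_mset_def irr_def degree_seq_def by simp
qed

end
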